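(* Let $N \geq 1$ be an integer and let $\pi : \{0,1,\dots,N-1\} \to \{0,1,\dots,N-1\}$ be any function. Then $\pi$ is a Hamiltonian cycle, i.e. $\pi$ is a permutation of $\{0,1,\dots,N-1\}$ consisting of a single cycle of length $N$, if and only if both of the following hold: (1) $\pi^j(0) \neq 0$ for every integer $j$ with $1 \leq j \leq N-1$ and $j \mid N$; and (2) $\pi^N(0) = 0$.
   Context: $\pi^j$ denotes the $j$-fold composition of $\pi$ with itself, and $j \mid N$ means $j$ divides $N$. In the paper, $\pi$ encodes a candidate traveling-salesman tour on $N$ cities: $\pi(i)$ is the city visited immediately after city $i$; the tour is a legal Hamiltonian cycle exactly when $\pi$ is a cyclic permutation of length $N$. *)

theory Defs
  imports Main
begin

definition hamiltonian_cycle :: "nat \<Rightarrow> (nat \<Rightarrow> nat) \<Rightarrow> bool" where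
  "hamiltonian_cycle N \<pi> \<longleftrightarrow>
     bij_betw \<pi> {..<N} {..<N} \<and>
     (\<forall>x\<in>{..<N}. \<forall>y\<in>{..<N}. \<exists>k. (\<pi> ^^ k) x = y)"

end

theory Submission
  imports Defs
begin

text \<open>Since \<open>\<pi>\<^sup>N(0) = 0\<close>, the minimal period \<open>p\<close> of \<open>0\<close> under \<open>\<pi>\<close> divides \<open>N\<close>, so the
  divisor condition says exactly that \<open>p = N\<close>. The orbit of \<open>0\<close> consists of the \<open>p\<close> distinct
  points \<open>\<pi>\<^sup>k(0)\<close>, \<open>k < p\<close>, inside the \<open>N\<close>-element set \<open>{0..N-1}\<close>; it exhausts this set
  precisely when \<open>p = N\<close>, and an orbit exhausting the set is the same as a single \<open>N\<close>-cycle.\<close>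

definition minimal_period :: "('a \<Rightarrow> 'a) \<Rightarrow> 'a \<Rightarrow> nat \<Rightarrow> bool" where
  "minimal_period f x p \<longleftrightarrow>
     0 < p \<and> (f ^^ p) x = x \<and> (\<forall>m. 0 < m \<longrightarrow> m < p \<longrightarrow> (f ^^ m) x \<noteq> x)"

lemma ex_minimal_period:
  assumes "0 < n" "(f ^^ n) x = x"
  obtains p where "minimal_period f x p"
proof
  let ?P = "\<lambda>p. 0 < p \<and> (f ^^ p) x = x"
  have "?P (LEAST p. ?P p)"
    using assms by (intro LeastI[of ?P n]) simp
  moreover have "\<not> ?P m" if "m < (LEAST p. ?P p)" for m
    using that by (rule not_less_Least)
  ultimately show "minimal_period f x (LEAST p. ?P p)"
    unfolding minimal_period_def by auto
qed

lemma minimal_period_dvd: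
  assumes "minimal_period f x p" "(f ^^ n) x = x"
  shows "p dvd n"
proof -
  have "(f ^^ p) x = x"
    using assms(1) unfolding minimal_period_def by simp
  then have "(f ^^ (n mod p)) x = x"
    using assms(2) by (simp add: funpow_mod_eq)
  then have "n mod p = 0"
    using assms(1) unfolding minimal_period_def by (meson mod_less_divisor not_gr_zero)
  then show ?thesis by auto
qed

lemma minimal_period_iff_proper_divisors:
  assumes "0 < n"
  shows "minimal_period f x n \<longleftrightarrow>
           (f ^^ n) x = x \<and> (\<forall>j. 0 < j \<and> j < n \<and> j dvd n \<longrightarrow> (f ^^ j) x \<noteq> x)"
proof
  assume "minimal_period f x n"
  then show "(f ^^ n) x = x \<and> (\<forall>j. 0 < j \<and> j < n \<and> j dvd n \<longrightarrow> (f ^^ j) x \<noteq> x)"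
    unfolding minimal_period_def by blast
next
  assume n: "(f ^^ n) x = x \<and> (\<forall>j. 0 < j \<and> j < n \<and> j dvd n \<longrightarrow> (f ^^ j) x \<noteq> x)"
  obtain p where p: "minimal_period f x p"
    using ex_minimal_period[of n f x] assms n by blast
  have "p dvd n"
    using n by (simp add: minimal_period_dvd[OF p])
  moreover have "0 < p" "(f ^^ p) x = x"
    using p unfolding minimal_period_def by auto
  moreover have "p \<le> n"
    using \<open>p dvd n\<close> assms by (rule dvd_imp_le)
  ultimately have "p = n"
    using n by (metis nat_less_le)
  with p show "minimal_period f x n" by simp
qed

lemma range_funpow_eq_image_lessThan:
  assumes "minimal_period f x p"
  shows "range (\<lambda>k. (f ^^ k) x) = (\<lambda>k. (f ^^ k) x) ` {..<p}"
proof -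
  have "(f ^^ k) x = (f ^^ (k mod p)) x" for k
    using assms unfolding minimal_period_def by (simp add: funpow_mod_eq)
  moreover have "k mod p < p" for k
    using assms unfolding minimal_period_def by simp
  ultimately have "(f ^^ k) x \<in> (\<lambda>k. (f ^^ k) x) ` {..<p}" for k
    by (metis lessThan_iff rev_image_eqI)
  then show ?thesis by auto
qed

lemma card_range_funpow:
  assumes "minimal_period f x p"
  shows "card (range (\<lambda>k. (f ^^ k) x)) = p"
proof -
  have "inj_on (\<lambda>k. (f ^^ k) x) {..<p}"
    using assms unfolding minimal_period_def
    by (simp add: inj_on_funpow_least flip: atLeast0LessThan)
  then show ?thesis
    by (simp add: range_funpow_eq_image_lessThan[OF assms] card_image)
qed

lemma range_funpow_subset:
  assumes "f ` S \<subseteq> S" "x \<in> S"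
  shows "range (\<lambda>k. (f ^^ k) x) \<subseteq> S"
proof -
  have "(f ^^ k) x \<in> S" for k
    using assms by (induction k) auto
  then show ?thesis by blast
qed

lemma cyclic_imp_minimal_period_card:
  assumes "finite S" "f ` S \<subseteq> S" "x \<in> S"
    and reach: "\<forall>y\<in>S. \<forall>z\<in>S. \<exists>k. (f ^^ k) y = z"
  shows "minimal_period f x (card S)"
proof -
  obtain k where "(f ^^ k) (f x) = x"
    using reach assms(2,3) by blast
  then have "(f ^^ Suc k) x = x"
    by (simp only: funpow_Suc_right comp_apply)
  then obtain p where p: "minimal_period f x p"
    by (rule ex_minimal_period[OF zero_less_Suc])
  have "S \<subseteq> range (\<lambda>k. (f ^^ k) x)"
    using reach assms(3) by (metis rangeI subsetI)
  then have "range (\<lambda>k. (f ^^ k) x) = S"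
    using range_funpow_subset[OF assms(2,3)] by blast
  with p card_range_funpow show ?thesis by metis
qed

lemma minimal_period_card_imp_cyclic:
  assumes "finite S" "f ` S \<subseteq> S" "x \<in> S" and p: "minimal_period f x (card S)"
  shows "bij_betw f S S \<and> (\<forall>y\<in>S. \<forall>z\<in>S. \<exists>k. (f ^^ k) y = z)"
proof -
  let ?n = "card S"
  have orbit: "range (\<lambda>k. (f ^^ k) x) = S"
    by (rule card_subset_eq[OF assms(1) range_funpow_subset[OF assms(2,3)]])
      (simp add: card_range_funpow[OF p])
  have n: "0 < ?n" "(f ^^ ?n) x = x"
    using p unfolding minimal_period_def by auto
  have shift: "(f ^^ (b + ?n)) x = (f ^^ b) x" for b
    using n by (simp add: funpow_add)
  have "S \<subseteq> f ` S"
  proof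
    fix z assume "z \<in> S"
    then obtain b where z: "z = (f ^^ b) x"
      using orbit by blast
    obtain m where "b + ?n = Suc m"
      using n(1) by (cases "b + ?n") auto
    then have "z = f ((f ^^ m) x)"
      using shift[of b] z by simp
    then show "z \<in> f ` S"
      using orbit by blast
  qed
  then have "f ` S = S"
    using assms(2) by blast
  then have "bij_betw f S S"
    using assms(1) by (simp add: bij_betw_def eq_card_imp_inj_on)
  moreover have "\<exists>k. (f ^^ k) y = z" if "y \<in> S" "z \<in> S" for y z
  proof -
    have "y \<in> (\<lambda>k. (f ^^ k) x) ` {..<?n}"
      using \<open>y \<in> S\<close> orbit range_funpow_eq_image_lessThan[OF p] by simp
    then obtain a where "a < ?n" "y = (f ^^ a) x"
      by auto
    obtain b where "z = (f ^^ b) x"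
      using \<open>z \<in> S\<close> orbit by blast
    have "(f ^^ (b + ?n - a)) y = (f ^^ (b + ?n - a + a)) x"
      using \<open>y = (f ^^ a) x\<close> by (simp add: funpow_add)
    also have "\<dots> = z"
      using \<open>a < ?n\<close> shift[of b] \<open>z = (f ^^ b) x\<close> by simp
    finally have "(f ^^ (b + ?n - a)) y = z" .
    then show ?thesis by blast
  qed
  ultimately show ?thesis by blast
qed

lemma cyclic_iff_minimal_period_card:
  assumes "finite S" "f ` S \<subseteq> S" "x \<in> S"
  shows "bij_betw f S S \<and> (\<forall>y\<in>S. \<forall>z\<in>S. \<exists>k. (f ^^ k) y = z) \<longleftrightarrow>
           minimal_period f x (card S)"
  using cyclic_imp_minimal_period_card[OF assms] minimal_period_card_imp_cyclic[OF assms]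
  by blast

theorem theorem2:
  fixes N :: nat and \<pi> :: "nat \<Rightarrow> nat"
  assumes "N \<ge> 1"
    and "\<forall>i\<in>{..<N}. \<pi> i \<in> {..<N}"
  shows "hamiltonian_cycle N \<pi> \<longleftrightarrow>
           ((\<forall>j. 1 \<le> j \<and> j \<le> N - 1 \<and> j dvd N \<longrightarrow> (\<pi> ^^ j) 0 \<noteq> 0) \<and>
            (\<pi> ^^ N) 0 = 0)"
proof -
  have "\<pi> ` {..<N} \<subseteq> {..<N}" "0 \<in> {..<N}"
    using assms by auto
  then have "hamiltonian_cycle N \<pi> \<longleftrightarrow> minimal_period \<pi> 0 N"
    unfolding hamiltonian_cycle_def
    using cyclic_iff_minimal_period_card[of "{..<N}" \<pi> 0] by simp
  also have "\<dots> \<longleftrightarrow> (\<pi> ^^ N) 0 = 0 \<and> (\<forall>j. 0 < j \<and> j < N \<and> j dvd N \<longrightarrow> (\<pi> ^^ j) 0 \<noteq> 0)"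
    using assms(1) by (simp add: minimal_period_iff_proper_divisors)
  also have "\<dots> \<longleftrightarrow> (\<forall>j. 1 \<le> j \<and> j \<le> N - 1 \<and> j dvd N \<longrightarrow> (\<pi> ^^ j) 0 \<noteq> 0) \<and> (\<pi> ^^ N) 0 = 0"
    using assms(1) by (auto simp: Suc_le_eq le_diff_conv2)
  finally show ?thesis .
qed

end
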